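(* For integers $n\ge0$ and $0\le i\le n/2$ let $g(i,n)=\binom{2(n-i)}{n-i}^2\binom{n-i}{i}$. Let $p$ be an odd prime, $m,r$ positive integers, and $j$ an integer with $0\le j\le mp^{r-1}/2$. Then $$(-4)^{jp}g(jp,mp^r)\equiv(-4)^jg(j,mp^{r-1})\pmod{p^r}.$$ *)

theory Defs
  imports "HOL-Number_Theory.Number_Theory"
begin

definition g :: "nat \<Rightarrow> nat \<Rightarrow> int" where
  "g i n = int ((2 * (n - i)) choose (n - i)) ^ 2 * int ((n - i) choose i)"

end

theory Submission
  imports Defs
begin

(*
  Write <N> = fact_prime_to p N for the product of the numbers in {1..N} prime to p. Then (pn)! = p^n n! <pn>, hence
  C(pa, pb) <pb> <p(a-b)> = C(a, b) <pa>, and with N = m p^(r-1), k = N - j this gives the integer identity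
    g(jp, pN) * <pk>^3 <pj> <p(k-j)> = g(j, N) * <2pk>^2,
  whose <.>-factors are units modulo p. If p^w divides j (hence k), then <p^(w+1) l> = <p^(w+1)>^l
  mod p^(w+1) makes both unit factors congruent, and Euler's theorem gives (-4)^(jp) = (-4)^j
  mod p^(w+1). The missing factor p^(r-1-w) of the modulus divides g(j, N): taking w = v_p(j), it
  divides C(N, j) because j C(N, j) = N C(N-1, j-1), and C(k+j, j) divides C(2k, k) C(k, j).
*)

lemma power_mult_prime_cong:
  fixes a :: int
  assumes "prime p" "coprime a (int p)" "p ^ w dvd j"
  shows "[a ^ (j * p) = a ^ j] (mod int p ^ (w + 1))"
proof -
  obtain i where j: "j = p ^ w * i"
    using assms(3) by blast
  have "1 < int p ^ (w + 1)"
    using prime_gt_1_nat[OF assms(1)] by (intro one_less_power) auto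
  then have "residues (int p ^ (w + 1))"
    by (simp add: residues_def)
  then have "[a ^ totient (p ^ (w + 1)) = 1] (mod int p ^ (w + 1))"
    using residues.euler_theorem[of "int p ^ (w + 1)" a] assms(2)
    by (simp add: nat_power_eq del: power_Suc)
  then have "[(a ^ totient (p ^ (w + 1))) ^ i = 1] (mod int p ^ (w + 1))"
    using cong_pow by fastforce
  moreover have "j * p = j + totient (p ^ (w + 1)) * i"
    using prime_gt_0_nat[OF assms(1)]
    by (simp add: j totient_prime_power_Suc[OF assms(1)] algebra_simps del: power_Suc)
  ultimately show ?thesis
    using cong_scalar_left[of _ 1 _ "a ^ j"] by (simp add: power_add power_mult)
qed

lemma cong_lift_by_common_factor:
  fixes a b d e x y m n :: int
  assumes "y * d = x * e" "[a * e = b * d] (mod m)" "n dvd x" "coprime d (m * n)"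
  shows "[a * y = b * x] (mod m * n)"
proof -
  have "m * n dvd (a * e - b * d) * x"
    using assms(2,3) by (intro mult_dvd_mono) (simp_all add: cong_iff_dvd_diff)
  also have "(a * e - b * d) * x = (a * y - b * x) * d"
    using assms(1) by (simp add: algebra_simps)
  finally have "[a * y * d = b * x * d] (mod m * n)"
    by (simp add: cong_iff_dvd_diff algebra_simps)
  then show ?thesis
    using assms(4) cong_mult_rcancel by blast
qed

lemma prime_power_dvd_binomial:
  assumes "prime p" "p ^ e dvd n" "j \<le> n"
  obtains w where "w \<le> e" "p ^ w dvd j" "p ^ (e - w) dvd (n choose j)"
proof (cases "p ^ e dvd j")
  case True
  then show ?thesis
    using that[of e] by simp
next
  case False
  define w where "w = multiplicity p j"
  have "j > 0" "n choose j \<noteq> 0"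
    using False assms(3) by (auto intro: gr0I)
  have "p ^ w dvd j"
    unfolding w_def by (rule multiplicity_dvd)
  then have "w < e"
    using False le_imp_power_dvd[of e w p] dvd_trans by (cases "w < e") auto
  have "j * (n choose j) = n * ((n - 1) choose (j - 1))"
    using times_binomial_minus1_eq[OF \<open>j > 0\<close>] .
  then have "p ^ e dvd j * (n choose j)"
    using assms(2) by (metis dvd_mult2)
  then have "e \<le> multiplicity p (j * (n choose j))"
    using assms(1) \<open>j > 0\<close> \<open>n choose j \<noteq> 0\<close>
    by (intro multiplicity_geI) (auto simp: prime_nat_iff)
  also have "\<dots> = w + multiplicity p (n choose j)"
    using assms(1) \<open>j > 0\<close> \<open>n choose j \<noteq> 0\<close>
    by (simp add: w_def prime_elem_multiplicity_mult_distrib)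
  finally have "e \<le> w + multiplicity p (n choose j)" .
  then have "p ^ (e - w) dvd (n choose j)"
    by (intro multiplicity_dvd') simp
  then show ?thesis
    using that[of w] \<open>w < e\<close> \<open>p ^ w dvd j\<close> by simp
qed

lemma binomial_dvd_central_binomial_mult:
  assumes "j \<le> k"
  shows "((k + j) choose j) dvd ((2 * k) choose k) * (k choose j)"
proof -
  have "((2 * k) choose k) * (k choose j) = ((2 * k) choose j) * ((2 * k - j) choose (k - j))"
    using choose_mult[of j k "2 * k"] assms by simp
  also have "(2 * k - j) choose (k - j) = (2 * k - j) choose k"
    using binomial_symmetric[of "k - j" "2 * k - j"] assms by simp
  also have "((2 * k) choose j) * ((2 * k - j) choose k) = ((2 * k) choose (k + j)) * ((k + j) choose j)"
    using choose_mult[of j "k + j" "2 * k"] assms by simp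
  finally show ?thesis
    by simp
qed

definition fact_prime_to :: "nat \<Rightarrow> nat \<Rightarrow> int" where
  "fact_prime_to p n = (\<Prod>x = 1..n. if p dvd x then 1 else int x)"

lemma fact_prime_to_nonzero: "fact_prime_to p n \<noteq> 0"
  by (simp add: fact_prime_to_def)

lemma coprime_fact_prime_to:
  assumes "prime p"
  shows "coprime (fact_prime_to p n) (int p)"
  unfolding fact_prime_to_def
proof (rule prod_coprime_left)
  fix x assume "x \<in> {1..n}"
  show "coprime (if p dvd x then 1 else int x) (int p)"
    using prime_imp_coprime[OF assms, of x] by (simp add: coprime_commute)
qed

lemma fact_mult_eq_fact_prime_to:
  assumes "0 < p"
  shows "(fact (p * n) :: int) = int p ^ n * fact n * fact_prime_to p (p * n)"
proof -
  have multiples: "{1..p * n} \<inter> {x. p dvd x} = (*) p ` {1..n}"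
    using assms by auto
  have "(fact (p * n) :: int) = (\<Prod>x = 1..p * n. int x)"
    by (simp add: fact_prod)
  also have "\<dots> = (\<Prod>x \<in> (*) p ` {1..n}. int x) * (\<Prod>x \<in> {1..p * n} - {x. p dvd x}. int x)"
    unfolding multiples[symmetric] by (rule prod.Int_Diff) simp
  also have "(\<Prod>x \<in> {1..p * n} - {x. p dvd x}. int x) = fact_prime_to p (p * n)"
    unfolding fact_prime_to_def by (simp add: prod.If_cases Diff_eq)
  also have "(\<Prod>x \<in> (*) p ` {1..n}. int x) = int p ^ n * fact n"
    using assms by (simp add: prod.reindex inj_on_def prod.distrib fact_prod)
  finally show ?thesis .
qed

lemma fact_prime_to_mult_cong:
  assumes "p dvd q"
  shows "[fact_prime_to p (q * a) = fact_prime_to p q ^ a] (mod int q)"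
proof (induction a)
  case 0
  then show ?case by (simp add: fact_prime_to_def)
next
  case (Suc a)
  define f where "f x = (if p dvd x then 1 else int x)" for x
  have shift: "[f (x + q * a) = f x] (mod int q)" for x
    using assms by (auto simp: f_def cong_def dvd_add_left_iff)
  have "fact_prime_to p (q * Suc a) = fact_prime_to p (q * a) * (\<Prod>x = 1..q. f (x + q * a))"
    unfolding fact_prime_to_def f_def[symmetric]
    using prod.ub_add_nat[of 1 "q * a" f q] prod.shift_bounds_cl_nat_ivl[of f 1 "q * a" q]
    by (simp add: add.commute)
  also have "[\<dots> = fact_prime_to p q ^ a * fact_prime_to p q] (mod int q)"
    using Suc.IH cong_prod[OF shift] by (intro cong_mult) (auto simp: fact_prime_to_def f_def)
  finally show ?case by (simp add: mult.commute)
qed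

lemma binomial_mult_fact_prime_to:
  assumes "0 < p" "b \<le> a"
  shows "int ((p * a) choose (p * b)) * fact_prime_to p (p * b) * fact_prime_to p (p * (a - b))
       = int (a choose b) * fact_prime_to p (p * a)"
proof -
  have fact_binomial_int: "(fact b :: int) * fact (a - b) * int (a choose b) = fact a"
    if "b \<le> a" for a b :: nat
    using arg_cong[OF binomial_fact_lemma[OF that], of int] by simp
  have "p * a - p * b = p * (a - b)"
    by (simp add: right_diff_distrib')
  then have "fact (p * b) * fact (p * (a - b)) * int ((p * a) choose (p * b)) = (fact (p * a) :: int)"
    using fact_binomial_int[of "p * b" "p * a"] assms(2) by simp
  then have "(int p ^ b * int p ^ (a - b) * fact b * fact (a - b))
      * (int ((p * a) choose (p * b)) * fact_prime_to p (p * b) * fact_prime_to p (p * (a - b)))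
    = (int p ^ a * fact b * fact (a - b)) * (int (a choose b) * fact_prime_to p (p * a))"
    unfolding fact_mult_eq_fact_prime_to[OF assms(1)] fact_binomial_int[OF assms(2), symmetric]
    by (simp add: ac_simps)
  moreover have "int p ^ b * int p ^ (a - b) = int p ^ a"
    using assms(2) by (simp flip: power_add)
  ultimately show ?thesis
    using assms(1) by simp
qed

lemma central_binomial_products_eq:
  assumes "0 < p" "j \<le> k"
  shows "int ((p * (2 * k)) choose (p * k)) ^ 2 * int ((p * k) choose (p * j))
           * (fact_prime_to p (p * k) ^ 3 * fact_prime_to p (p * j) * fact_prime_to p (p * (k - j)))
       = int ((2 * k) choose k) ^ 2 * int (k choose j) * fact_prime_to p (p * (2 * k)) ^ 2"
    (is "?lhs = ?rhs")
proof -
  have "?lhs * fact_prime_to p (p * k)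
      = (int ((p * (2 * k)) choose (p * k)) * fact_prime_to p (p * k) * fact_prime_to p (p * k)) ^ 2
        * (int ((p * k) choose (p * j)) * fact_prime_to p (p * j) * fact_prime_to p (p * (k - j)))"
    by (simp add: power2_eq_square power3_eq_cube ac_simps)
  also have "\<dots> = ?rhs * fact_prime_to p (p * k)"
    using binomial_mult_fact_prime_to[OF assms(1), of k "2 * k"]
          binomial_mult_fact_prime_to[OF assms]
    by (simp add: power2_eq_square ac_simps)
  finally show ?thesis
    by (simp add: fact_prime_to_nonzero)
qed

lemma fact_prime_to_central_cong:
  assumes "0 < p" "p ^ w dvd j" "p ^ w dvd k" "j \<le> k"
  shows "[fact_prime_to p (p * (2 * k)) ^ 2
          = fact_prime_to p (p * k) ^ 3 * fact_prime_to p (p * j) * fact_prime_to p (p * (k - j))]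
         (mod int p ^ (w + 1))"
proof -
  obtain i l where j: "j = p ^ w * i" and k: "k = p ^ w * l"
    using assms(2,3) by blast
  have "i \<le> l"
    using assms(1,4) by (simp add: j k)
  define q where "q = p ^ (w + 1)"
  define c where "c = fact_prime_to p q"
  have block: "[fact_prime_to p (p * (p ^ w * n)) = c ^ n] (mod int p ^ (w + 1))" for n
    using fact_prime_to_mult_cong[of p q n] by (simp add: c_def q_def ac_simps)
  have "[fact_prime_to p (p * (2 * k)) ^ 2 = (c ^ (2 * l)) ^ 2] (mod int p ^ (w + 1))"
    using block[of "2 * l"] by (simp add: k cong_pow ac_simps)
  also have "(c ^ (2 * l)) ^ 2 = (c ^ l) ^ 3 * c ^ i * c ^ (l - i)"
    using \<open>i \<le> l\<close> by (simp flip: power_add power_mult)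
  also have "[\<dots> = fact_prime_to p (p * k) ^ 3 * fact_prime_to p (p * j) * fact_prime_to p (p * (k - j))]
      (mod int p ^ (w + 1))"
    using block[THEN cong_sym] by (simp add: j k flip: diff_mult_distrib2) (intro cong_mult cong_pow)
  finally show ?thesis .
qed

lemma central_binomial_products_cong:
  assumes "prime p" "odd p" "j \<le> k" "p ^ w dvd j" "p ^ w dvd k"
    and "int p ^ v dvd int ((2 * k) choose k) ^ 2 * int (k choose j)"
  shows "[(-4) ^ (j * p) * (int ((p * (2 * k)) choose (p * k)) ^ 2 * int ((p * k) choose (p * j)))
          = (-4) ^ j * (int ((2 * k) choose k) ^ 2 * int (k choose j))] (mod int p ^ (w + 1) * int p ^ v)"
proof -
  have "0 < p"
    using assms(1) prime_gt_0_nat by blast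
  have "coprime (2 ^ 2) (int p)"
    using assms(2) by (subst coprime_power_left_iff) simp
  then have "[(-4::int) ^ (j * p) = (-4) ^ j] (mod int p ^ (w + 1))"
    using power_mult_prime_cong assms(1,4) by simp
  then have "[(-4) ^ (j * p) * fact_prime_to p (p * (2 * k)) ^ 2
      = (-4) ^ j * (fact_prime_to p (p * k) ^ 3 * fact_prime_to p (p * j) * fact_prime_to p (p * (k - j)))]
      (mod int p ^ (w + 1))"
    using fact_prime_to_central_cong[OF \<open>0 < p\<close> assms(4,5,3)] by (rule cong_mult)
  moreover have "coprime (fact_prime_to p (p * k) ^ 3 * fact_prime_to p (p * j) * fact_prime_to p (p * (k - j)))
      (int p ^ (w + 1) * int p ^ v)"
    using coprime_fact_prime_to[OF assms(1)] by simp
  ultimately show ?thesis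
    using central_binomial_products_eq[OF \<open>0 < p\<close> assms(3)] assms(6) cong_lift_by_common_factor
    by blast
qed

lemma g_mult_prime_cong:
  assumes "prime p" "odd p" "2 * j \<le> n" "p ^ e dvd n"
  shows "[(-4::int) ^ (j * p) * g (j * p) (n * p) = (-4) ^ j * g j n] (mod int p ^ (e + 1))"
proof -
  define k where "k = n - j"
  have "j \<le> k" "n = k + j"
    using assms(3) by (simp_all add: k_def)
  have "n * p - j * p = p * k"
    unfolding k_def by (metis diff_mult_distrib mult.commute)
  then have g_lhs: "g (j * p) (n * p) = int ((p * (2 * k)) choose (p * k)) ^ 2 * int ((p * k) choose (p * j))"
    by (simp add: g_def ac_simps)
  have g_rhs: "g j n = int ((2 * k) choose k) ^ 2 * int (k choose j)"
    by (simp add: g_def k_def)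
  obtain w where "w \<le> e" "p ^ w dvd j" "p ^ (e - w) dvd (n choose j)"
    using prime_power_dvd_binomial[OF assms(1,4)] \<open>n = k + j\<close> by (metis le_add2)
  have "p ^ w dvd k"
    using assms(4) le_imp_power_dvd[OF \<open>w \<le> e\<close>] \<open>p ^ w dvd j\<close>
    unfolding k_def by (meson dvd_diff_nat dvd_trans)
  have "(n choose j) dvd ((2 * k) choose k) ^ 2 * (k choose j)"
    using dvd_mult[OF binomial_dvd_central_binomial_mult[OF \<open>j \<le> k\<close>], of "(2 * k) choose k"] \<open>n = k + j\<close>
    by (simp add: power2_eq_square mult.assoc)
  then have "int p ^ (e - w) dvd int ((2 * k) choose k) ^ 2 * int (k choose j)"
    using \<open>p ^ (e - w) dvd (n choose j)\<close> dvd_trans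
    by (metis of_nat_dvd_iff of_nat_mult of_nat_power)
  then have "[(-4) ^ (j * p) * g (j * p) (n * p) = (-4) ^ j * g j n] (mod int p ^ (w + 1) * int p ^ (e - w))"
    unfolding g_lhs g_rhs
    using central_binomial_products_cong[OF assms(1,2) \<open>j \<le> k\<close> \<open>p ^ w dvd j\<close> \<open>p ^ w dvd k\<close>] by blast
  moreover have "int p ^ (w + 1) * int p ^ (e - w) = int p ^ (e + 1)"
    using \<open>w \<le> e\<close> by (simp add: power_add[symmetric] del: power_Suc)
  ultimately show ?thesis
    by argo
qed

theorem mainTheorem16:
  fixes p m r j :: nat
  assumes "prime p" and "odd p" and "m > 0" and "r > 0"
    and "2 * j \<le> m * p ^ (r - 1)"
  shows "[(-4::int) ^ (j * p) * g (j * p) (m * p ^ r)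
          = (-4) ^ j * g j (m * p ^ (r - 1))] (mod (int p ^ r))"
proof -
  have "m * p ^ (r - 1) * p = m * p ^ r" "r - 1 + 1 = r"
    using assms(4) by (simp_all add: mult.assoc flip: power_Suc2)
  moreover have "[(-4::int) ^ (j * p) * g (j * p) (m * p ^ (r - 1) * p) = (-4) ^ j * g j (m * p ^ (r - 1))]
      (mod int p ^ (r - 1 + 1))"
    by (rule g_mult_prime_cong[OF assms(1,2,5)]) simp
  ultimately show ?thesis
    by argo
qed

end
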